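(* Let $(\mathbb{L},\Box,\Diamond)$ be an $\mathcal{L}$-algebra as in the context, let $f$ be a proper $\mathbf{A}$-filter of $\mathbb{L}$ and $i$ a proper $\mathbf{A}$-ideal of $\mathbb{L}$. Then (1) $\bigvee_{b\in\mathbb{L}}(f^{-\Diamond}(b)\otimes i(b))=\bigvee_{a\in\mathbb{L}}(f(a)\otimes i(\Diamond a))$; (2) $\bigvee_{b\in\mathbb{L}}(f(b)\otimes i^{-\Box}(b))=\bigvee_{a\in\mathbb{L}}(f(\Box a)\otimes i(a))$.
   Context: $\mathbf{A}=(D,1,0,\vee,\wedge,\otimes,\to)$ is a fixed complete lattice with top $1$ and bottom $0$, frame-distributive and dually frame-distributive, with a commutative associative $\otimes$ residuated by $\to$ ($\alpha\otimes\beta\le\gamma$ iff $\alpha\le\beta\to\gamma$), and $1\to\alpha=\alpha$ for all $\alpha$. An $\mathcal{L}$-algebra $(\mathbb{L},\Box,\Diamond)$ is a bounded lattice $\mathbb{L}$ with unary operations $\Box$ preserving finite meets (including $\Box\top=\top$) and $\Diamond$ preserving finite joins (including $\Diamond\bot=\bot$). An $\mathbf{A}$-filter of $\mathbb{L}$ is $f:\mathbb{L}\to\mathbf{A}$ with $f(\top)=1$ and $f(a\wedge b)=f(a)\wedge f(b)$; it is proper if moreover $f(\bot)=0$. An $\mathbf{A}$-ideal is $i:\mathbb{L}\to\mathbf{A}$ with $i(\bot)=1$ and $i(a\vee b)=i(a)\wedge i(b)$; proper if moreover $i(\top)=0$. For $k:\mathbb{L}\to\mathbf{A}$, $k^{-\Diamond}(a)=\bigvee\{k(b)\mid\Diamond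 b\le a\}$ and $k^{-\Box}(a)=\bigvee\{k(b)\mid a\le\Box b\}$. *)

theory Defs
  imports Main
begin

definition residuated_frame_algebra ::
  "('a::complete_lattice \<Rightarrow> 'a \<Rightarrow> 'a) \<Rightarrow> ('a \<Rightarrow> 'a \<Rightarrow> 'a) \<Rightarrow> bool" where
  "residuated_frame_algebra tensor res \<longleftrightarrow>
     (\<forall>(a::'a) S. inf a (Sup S) = (SUP s\<in>S. inf a s)) \<and>
     (\<forall>(a::'a) S. sup a (Inf S) = (INF s\<in>S. sup a s)) \<and>
     (\<forall>x y. tensor x y = tensor y x) \<and>
     (\<forall>x y z. tensor (tensor x y) z = tensor x (tensor y z)) \<and>
     (\<forall>x y z. tensor x y \<le> z \<longleftrightarrow> x \<le> res y z) \<and>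
     (\<forall>a. res top a = a)"

definition L_algebra :: "('b::bounded_lattice \<Rightarrow> 'b) \<Rightarrow> ('b \<Rightarrow> 'b) \<Rightarrow> bool" where
  "L_algebra box dia \<longleftrightarrow>
     box top = top \<and> (\<forall>a b. box (inf a b) = inf (box a) (box b)) \<and>
     dia bot = bot \<and> (\<forall>a b. dia (sup a b) = sup (dia a) (dia b))"

definition A_filter :: "('b::bounded_lattice \<Rightarrow> 'a::complete_lattice) \<Rightarrow> bool" where
  "A_filter f \<longleftrightarrow> f top = top \<and> (\<forall>a b. f (inf a b) = inf (f a) (f b))"

definition proper_A_filter :: "('b::bounded_lattice \<Rightarrow> 'a::complete_lattice) \<Rightarrow> bool" where
  "proper_A_filter f \<longleftrightarrow> A_filter f \<and> f bot = bot"

definition A_ideal :: "('b::bounded_lattice \<Rightarrow> 'a::complete_lattice) \<Rightarrow> bool" where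
  "A_ideal i \<longleftrightarrow> i bot = top \<and> (\<forall>a b. i (sup a b) = inf (i a) (i b))"

definition proper_A_ideal :: "('b::bounded_lattice \<Rightarrow> 'a::complete_lattice) \<Rightarrow> bool" where
  "proper_A_ideal i \<longleftrightarrow> A_ideal i \<and> i top = bot"

definition inv_dia :: "('b::bounded_lattice \<Rightarrow> 'b) \<Rightarrow> ('b \<Rightarrow> 'a::complete_lattice) \<Rightarrow> 'b \<Rightarrow> 'a" where
  "inv_dia dia k a = Sup {k b | b. dia b \<le> a}"

definition inv_box :: "('b::bounded_lattice \<Rightarrow> 'b) \<Rightarrow> ('b \<Rightarrow> 'a::complete_lattice) \<Rightarrow> 'b \<Rightarrow> 'a" where
  "inv_box box k a = Sup {k b | b. a \<le> box b}"

end

theory Submission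
  imports Defs
begin

text \<open>Both identities are instances of one fact: since the product distributes over
arbitrary joins in each argument, the left-hand join ranges over products f c \<otimes> i b
with \<Diamond>c \<le> b (resp. f b \<otimes> i c with b \<le> \<Box>c); antitonicity of the ideal (resp.
monotonicity of the filter) lets every such term be replaced by the largest one,
taken at b = \<Diamond>c (resp. b = \<Box>c), which itself occurs on the left.\<close>

locale comm_residuated =
  fixes tensor res :: "'a::complete_lattice \<Rightarrow> 'a \<Rightarrow> 'a"
  assumes tensor_commute: "tensor x y = tensor y x"
    and residuation: "tensor x y \<le> z \<longleftrightarrow> x \<le> res y z"
begin

lemma tensor_mono_left: "x \<le> x' \<Longrightarrow> tensor x y \<le> tensor x' y"
  using residuation order_trans by blast

lemma tensor_mono: "x \<le> x' \<Longrightarrow> y \<le> y' \<Longrightarrow> tensor x y \<le> tensor x' y'"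
  by (metis tensor_commute tensor_mono_left order_trans)

lemma tensor_Sup_left: "tensor (Sup S) y = (SUP s\<in>S. tensor s y)"
proof (rule antisym)
  have "Sup S \<le> res y (SUP s\<in>S. tensor s y)"
    by (rule Sup_least) (auto simp: residuation[symmetric] intro: SUP_upper)
  then show "tensor (Sup S) y \<le> (SUP s\<in>S. tensor s y)"
    by (simp add: residuation)
  show "(SUP s\<in>S. tensor s y) \<le> tensor (Sup S) y"
    by (rule SUP_least) (simp add: tensor_mono_left Sup_upper)
qed

lemma SUP_tensor_Sup_related:
  assumes related: "\<And>c. R c (\<phi> c)"
    and antitone: "\<And>b c. R c b \<Longrightarrow> h b \<le> h (\<phi> c)"
  shows "(SUP b. tensor (Sup {g c |c. R c b}) (h b)) = (SUP c. tensor (g c) (h (\<phi> c)))"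
proof (rule antisym)
  show "(SUP b. tensor (Sup {g c |c. R c b}) (h b)) \<le> (SUP c. tensor (g c) (h (\<phi> c)))"
  proof (rule SUP_least)
    fix b
    have "tensor (g c) (h b) \<le> (SUP c. tensor (g c) (h (\<phi> c)))" if "R c b" for c
      using tensor_mono[OF order_refl antitone[OF that]]
      by (rule order_trans) (rule SUP_upper, simp)
    then show "tensor (Sup {g c |c. R c b}) (h b) \<le> (SUP c. tensor (g c) (h (\<phi> c)))"
      by (auto simp: tensor_Sup_left intro: SUP_least)
  qed
  show "(SUP c. tensor (g c) (h (\<phi> c))) \<le> (SUP b. tensor (Sup {g c |c. R c b}) (h b))"
  proof (rule SUP_least)
    fix c
    have "g c \<le> Sup {g c' |c'. R c' (\<phi> c)}"
      using related by (blast intro: Sup_upper)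
    then have "tensor (g c) (h (\<phi> c)) \<le> tensor (Sup {g c' |c'. R c' (\<phi> c)}) (h (\<phi> c))"
      by (rule tensor_mono_left)
    also have "\<dots> \<le> (SUP b. tensor (Sup {g c |c. R c b}) (h b))"
      by (rule SUP_upper) simp
    finally show "tensor (g c) (h (\<phi> c)) \<le> (SUP b. tensor (Sup {g c |c. R c b}) (h b))" .
  qed
qed

end

lemma residuated_frame_algebra_comm_residuated:
  "residuated_frame_algebra tensor res \<Longrightarrow> comm_residuated tensor res"
  unfolding residuated_frame_algebra_def comm_residuated_def by blast

lemma A_filter_mono: "A_filter f \<Longrightarrow> x \<le> y \<Longrightarrow> f x \<le> f y"
  unfolding A_filter_def by (metis inf.absorb_iff1 le_inf_iff order_refl)

lemma A_ideal_antimono: "A_ideal i \<Longrightarrow> x \<le> y \<Longrightarrow> i y \<le> i x"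
  unfolding A_ideal_def by (metis sup.absorb_iff2 le_inf_iff order_refl)

theorem mainTheorem5:
  fixes tensor res :: "'a::complete_lattice \<Rightarrow> 'a \<Rightarrow> 'a"
    and box dia :: "'b::bounded_lattice \<Rightarrow> 'b"
    and f i :: "'b \<Rightarrow> 'a"
  assumes "residuated_frame_algebra tensor res"
    and "L_algebra box dia"
    and "proper_A_filter f"
    and "proper_A_ideal i"
  shows "(SUP b. tensor (inv_dia dia f b) (i b)) = (SUP a. tensor (f a) (i (dia a)))
    \<and> (SUP b. tensor (f b) (inv_box box i b)) = (SUP a. tensor (f (box a)) (i a))"
proof
  interpret comm_residuated tensor res
    using assms(1) by (rule residuated_frame_algebra_comm_residuated)
  have f_mono: "f x \<le> f y" if "x \<le> y" for x y
    using assms(3) that by (simp add: proper_A_filter_def A_filter_mono)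
  have i_antimono: "i y \<le> i x" if "x \<le> y" for x y
    using assms(4) that by (simp add: proper_A_ideal_def A_ideal_antimono)
  show "(SUP b. tensor (inv_dia dia f b) (i b)) = (SUP a. tensor (f a) (i (dia a)))"
    unfolding inv_dia_def
    by (rule SUP_tensor_Sup_related[where R = "\<lambda>c b. dia c \<le> b"]) (simp_all add: i_antimono)
  have "(SUP b. tensor (inv_box box i b) (f b)) = (SUP a. tensor (i a) (f (box a)))"
    unfolding inv_box_def
    by (rule SUP_tensor_Sup_related[where R = "\<lambda>c b. b \<le> box c"]) (simp_all add: f_mono)
  then show "(SUP b. tensor (f b) (inv_box box i b)) = (SUP a. tensor (f (box a)) (i a))"
    by (simp add: tensor_commute)
qed

end
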